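(* Let $G$ be a graph with vertex order $v_1,\ldots,v_n$, let $D$ be a minimal dominating set of $G$, let $u,w\in D$ be adjacent, and let $v\in P_D(u)$. Let $X_{uv}$, $D'$, $D^*$ and $Z_{uv}$ be as defined in the context. Then $D^*$ is a minimal dominating set of $G$, $X_{uv}\cup\{v\}\subseteq D^*$, $|E(G[D^*])|<|E(G[D])|$, and $v$ is an isolated vertex of $G[D^*]$.
   Context: Graphs are finite, simple, undirected; $N(x)$ is the open and $N[x]=N(x)\cup\{x\}$ the closed neighborhood, $N[S]=\bigcup_{x\in S}N[x]$. A dominating set is $D\subseteq V(G)$ with $N[D]=V(G)$; it is minimal if no proper subset is dominating. For a dominating set $D$ and $x\in D$, a vertex $y$ is private for $x$ if $y\in N[x]\setminus N[D\setminus\{x\}]$; $P_D[x]$ is the set of such $y$ and $P_D(x)=P_D[x]\cap N(x)$. Fix an order $v_1,\ldots,v_n$ of $V(G)$. Greedy removal from a dominating set $D'$: while the current set $S$ is not a minimal dominating set, remove from $S$ the vertex $v_i$ of smallest index $i$ such that $S\setminus\{v_i\}$ is still dominating. Given $D,u,v$: $X_{uv}$ is built by starting from $\emptyset$ and repeatedly adding the smallest-index vertex of $P_D(u)\setminus N[\{v\}\cup X_{uv}]$ while this set is nonempty (so $X_{uv}$ is a maximal independent set of $G[P_D(u)\setminus N[v]]$). Let $D'=(D\setminus\{u\})\cup X_{uv}\cup\{v\}$ (a dominating set), let $D^*$ be the result of greedy removal from $D'$, and $Z_{uv}=D'\setminus D^*$. *)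

theory Defs
  imports Main "HOL-Library.While_Combinator"
begin

definition graph :: "'a set \<Rightarrow> ('a \<Rightarrow> 'a \<Rightarrow> bool) \<Rightarrow> bool" where
  "graph V E \<longleftrightarrow> finite V \<and> (\<forall>x y. E x y \<longrightarrow> x \<in> V \<and> y \<in> V)
     \<and> (\<forall>x y. E x y \<longrightarrow> E y x) \<and> (\<forall>x. \<not> E x x)"

definition nbh :: "('a \<Rightarrow> 'a \<Rightarrow> bool) \<Rightarrow> 'a \<Rightarrow> 'a set" where
  "nbh E x = {y. E x y}"

definition cnbh :: "('a \<Rightarrow> 'a \<Rightarrow> bool) \<Rightarrow> 'a \<Rightarrow> 'a set" where
  "cnbh E x = insert x (nbh E x)"

definition cnbhs :: "('a \<Rightarrow> 'a \<Rightarrow> bool) \<Rightarrow> 'a set \<Rightarrow> 'a set" where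
  "cnbhs E S = (\<Union>x\<in>S. cnbh E x)"

definition dominating :: "'a set \<Rightarrow> ('a \<Rightarrow> 'a \<Rightarrow> bool) \<Rightarrow> 'a set \<Rightarrow> bool" where
  "dominating V E D \<longleftrightarrow> D \<subseteq> V \<and> cnbhs E D = V"

definition minimal_dominating :: "'a set \<Rightarrow> ('a \<Rightarrow> 'a \<Rightarrow> bool) \<Rightarrow> 'a set \<Rightarrow> bool" where
  "minimal_dominating V E D \<longleftrightarrow> dominating V E D \<and> (\<forall>D'. D' \<subset> D \<longrightarrow> \<not> dominating V E D')"

definition priv_closed :: "('a \<Rightarrow> 'a \<Rightarrow> bool) \<Rightarrow> 'a set \<Rightarrow> 'a \<Rightarrow> 'a set" where
  "priv_closed E D x = cnbh E x - cnbhs E (D - {x})"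

definition priv_open :: "('a \<Rightarrow> 'a \<Rightarrow> bool) \<Rightarrow> 'a set \<Rightarrow> 'a \<Rightarrow> 'a set" where
  "priv_open E D x = priv_closed E D x \<inter> nbh E x"

definition induced_edges :: "('a \<Rightarrow> 'a \<Rightarrow> bool) \<Rightarrow> 'a set \<Rightarrow> 'a set set" where
  "induced_edges E S = {{x, y} | x y. x \<in> S \<and> y \<in> S \<and> E x y}"

definition isolated_in :: "('a \<Rightarrow> 'a \<Rightarrow> bool) \<Rightarrow> 'a set \<Rightarrow> 'a \<Rightarrow> bool" where
  "isolated_in E S v \<longleftrightarrow> v \<in> S \<and> (\<forall>y\<in>S. \<not> E v y)"

text \<open>The vertex order v_1,...,v_n is given by an injective index function idx on V;
  min_idx idx A is the vertex of A with smallest index.\<close>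
definition min_idx :: "('a \<Rightarrow> nat) \<Rightarrow> 'a set \<Rightarrow> 'a" where
  "min_idx idx A = (SOME x. x \<in> A \<and> (\<forall>y\<in>A. idx x \<le> idx y))"

definition greedy_removal :: "'a set \<Rightarrow> ('a \<Rightarrow> 'a \<Rightarrow> bool) \<Rightarrow> ('a \<Rightarrow> nat) \<Rightarrow> 'a set \<Rightarrow> 'a set" where
  "greedy_removal V E idx D' =
     while (\<lambda>S. \<not> minimal_dominating V E S)
           (\<lambda>S. S - {min_idx idx {x \<in> S. dominating V E (S - {x})}}) D'"

definition X_set :: "('a \<Rightarrow> 'a \<Rightarrow> bool) \<Rightarrow> ('a \<Rightarrow> nat) \<Rightarrow> 'a set \<Rightarrow> 'a \<Rightarrow> 'a \<Rightarrow> 'a set" where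
  "X_set E idx D u v =
     while (\<lambda>X. priv_open E D u - cnbhs E ({v} \<union> X) \<noteq> {})
           (\<lambda>X. insert (min_idx idx (priv_open E D u - cnbhs E ({v} \<union> X))) X) {}"

definition D'_set :: "('a \<Rightarrow> 'a \<Rightarrow> bool) \<Rightarrow> ('a \<Rightarrow> nat) \<Rightarrow> 'a set \<Rightarrow> 'a \<Rightarrow> 'a \<Rightarrow> 'a set" where
  "D'_set E idx D u v = (D - {u}) \<union> X_set E idx D u v \<union> {v}"

definition Dstar_set :: "'a set \<Rightarrow> ('a \<Rightarrow> 'a \<Rightarrow> bool) \<Rightarrow> ('a \<Rightarrow> nat) \<Rightarrow> 'a set \<Rightarrow> 'a \<Rightarrow> 'a \<Rightarrow> 'a set" where
  "Dstar_set V E idx D u v = greedy_removal V E idx (D'_set E idx D u v)"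

definition Z_set :: "'a set \<Rightarrow> ('a \<Rightarrow> 'a \<Rightarrow> bool) \<Rightarrow> ('a \<Rightarrow> nat) \<Rightarrow> 'a set \<Rightarrow> 'a \<Rightarrow> 'a \<Rightarrow> 'a set" where
  "Z_set V E idx D u v = D'_set E idx D u v - Dstar_set V E idx D u v"

end

theory Submission
  imports Defs
begin

text \<open>The new vertices \<open>X\<^sub>u\<^sub>v \<union> {v}\<close> dominate every private neighbour of \<open>u\<close>,
  and \<open>u\<close> itself is dominated by \<open>w\<close>, so \<open>D'\<close> is dominating. The new vertices are
  private neighbours of \<open>u\<close> forming an independent set, so inside \<open>D'\<close> they have no
  neighbours at all. Hence greedy removal can never delete one of them (it would become
  undominated), which makes \<open>v\<close> isolated in \<open>D\<^sup>*\<close>, and every edge of \<open>G[D\<^sup>*]\<close> lies in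
  \<open>G[D - {u}]\<close>, which lacks the edge \<open>uw\<close> of \<open>G[D]\<close>.\<close>

lemma graph_sym: "graph V E \<Longrightarrow> E x y \<Longrightarrow> E y x"
  and graph_irrefl: "graph V E \<Longrightarrow> \<not> E x x"
  and graph_finite: "graph V E \<Longrightarrow> finite V"
  unfolding graph_def by blast+

lemma cnbhs_subset: "graph V E \<Longrightarrow> S \<subseteq> V \<Longrightarrow> cnbhs E S \<subseteq> V"
  unfolding cnbhs_def cnbh_def nbh_def graph_def by blast

lemma min_idx_in: "A \<noteq> {} \<Longrightarrow> min_idx idx A \<in> A"
proof -
  assume "A \<noteq> {}"
  then obtain k where "k \<in> A" by blast
  then have "\<exists>x. x \<in> A \<and> (\<forall>y\<in>A. idx x \<le> idx y)"
    using ex_has_least_nat[of "\<lambda>x. x \<in> A" k idx] by blast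
  then show ?thesis unfolding min_idx_def by (rule someI2_ex) blast
qed

lemma priv_open_iff:
  "x \<in> priv_open E D u \<longleftrightarrow> E u x \<and> (\<forall>y\<in>D - {u}. x \<noteq> y \<and> \<not> E y x)"
  unfolding priv_open_def priv_closed_def cnbhs_def cnbh_def nbh_def by blast

lemma priv_open_subset: "graph V E \<Longrightarrow> priv_open E D u \<subseteq> V"
  by (auto simp: graph_def priv_open_iff)

lemma dominating_mono:
  assumes "graph V E" "dominating V E S" "S \<subseteq> T" "T \<subseteq> V"
  shows "dominating V E T"
  using assms cnbhs_subset[OF assms(1,4)] unfolding dominating_def cnbhs_def by blast

lemma removable_of_not_minimal_dominating:
  assumes "graph V E" "dominating V E S" "\<not> minimal_dominating V E S"
  shows "\<exists>x\<in>S. dominating V E (S - {x})"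
proof -
  obtain T where T: "T \<subset> S" "dominating V E T"
    using assms(2,3) unfolding minimal_dominating_def by blast
  then obtain x where x: "x \<in> S" "x \<notin> T" by blast
  have "T \<subseteq> S - {x}" using T x by blast
  moreover have "S - {x} \<subseteq> V" using assms(2) unfolding dominating_def by blast
  ultimately have "dominating V E (S - {x})" by (rule dominating_mono[OF assms(1) T(2)])
  with x show ?thesis by blast
qed

lemma removable_has_neighbour:
  assumes "dominating V E (S - {x})" "x \<in> V"
  shows "\<exists>y\<in>S - {x}. E y x"
  using assms unfolding dominating_def cnbhs_def cnbh_def nbh_def by blast

lemma dominating_exchange:
  assumes "graph V E" "dominating V E D" "u \<in> cnbhs E (D - {u})"
    and "Y \<subseteq> V" "priv_open E D u \<subseteq> cnbhs E Y"
  shows "dominating V E ((D - {u}) \<union> Y)"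
proof -
  have "z \<in> cnbhs E ((D - {u}) \<union> Y)" if "z \<in> V" for z
  proof (cases "z \<in> cnbhs E (D - {u})")
    case False
    have "z \<in> cnbhs E D" using \<open>z \<in> V\<close> assms(2) unfolding dominating_def by blast
    with False have "z \<in> cnbh E u" unfolding cnbhs_def by blast
    with False assms(3) have "z \<in> priv_open E D u"
      unfolding priv_open_def priv_closed_def cnbh_def by auto
    with assms(5) show ?thesis unfolding cnbhs_def by blast
  qed (auto simp: cnbhs_def)
  moreover have "(D - {u}) \<union> Y \<subseteq> V" using assms(2,4) unfolding dominating_def by blast
  ultimately show ?thesis
    using cnbhs_subset[OF assms(1)] unfolding dominating_def by blast
qed

text \<open>A removable vertex is dominated by the other vertices of the current set, so vertices
  without neighbours in \<open>S\<^sub>0\<close> are never removed.\<close>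

lemma greedy_removal_props:
  assumes "graph V E" "dominating V E S\<^sub>0" "K \<subseteq> S\<^sub>0" "\<forall>x\<in>K. \<forall>y\<in>S\<^sub>0. \<not> E y x"
  shows "minimal_dominating V E (greedy_removal V E idx S\<^sub>0)
    \<and> K \<subseteq> greedy_removal V E idx S\<^sub>0 \<and> greedy_removal V E idx S\<^sub>0 \<subseteq> S\<^sub>0"
  unfolding greedy_removal_def
proof (rule while_rule[where P = "\<lambda>S. dominating V E S \<and> K \<subseteq> S \<and> S \<subseteq> S\<^sub>0"
      and r = "measure card"])
  fix S
  assume inv: "dominating V E S \<and> K \<subseteq> S \<and> S \<subseteq> S\<^sub>0" and "\<not> minimal_dominating V E S"
  define m where "m = min_idx idx {x \<in> S. dominating V E (S - {x})}"
  have "m \<in> S" and dom: "dominating V E (S - {m})"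
    using min_idx_in[of "{x \<in> S. dominating V E (S - {x})}" idx]
      removable_of_not_minimal_dominating[OF assms(1)] inv \<open>\<not> minimal_dominating V E S\<close>
    unfolding m_def by blast+
  moreover have "m \<in> V" using \<open>m \<in> S\<close> inv unfolding dominating_def by blast
  then have "m \<notin> K" using removable_has_neighbour[OF dom] inv assms(4) by blast
  ultimately show "dominating V E (S - {m}) \<and> K \<subseteq> S - {m} \<and> S - {m} \<subseteq> S\<^sub>0"
    using inv by blast
  have "finite S" using inv graph_finite[OF assms(1)] finite_subset
    unfolding dominating_def by blast
  then show "(S - {m}, S) \<in> measure card"
    using card_Diff1_less[OF _ \<open>m \<in> S\<close>] by simp
qed (use assms in auto)

lemma induced_edges_mono: "S \<subseteq> T \<Longrightarrow> induced_edges E S \<subseteq> induced_edges E T"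
  unfolding induced_edges_def by blast

lemma finite_induced_edges: "finite S \<Longrightarrow> finite (induced_edges E S)"
  by (rule finite_subset[of _ "Pow S"]) (auto simp: induced_edges_def)

lemma induced_edges_Diff_isolated:
  assumes "graph V E" "\<forall>x\<in>K. \<forall>y\<in>S. \<not> E y x"
  shows "induced_edges E (S - K) = induced_edges E S"
  using assms graph_sym[OF assms(1)] unfolding induced_edges_def by blast

lemma card_induced_edges_Diff_less:
  assumes "finite D" "u \<in> D" "w \<in> D" "E u w"
  shows "card (induced_edges E (D - {u})) < card (induced_edges E D)"
proof (rule psubset_card_mono)
  have "{u, w} \<in> induced_edges E D" using assms unfolding induced_edges_def by blast
  moreover have "{u, w} \<notin> induced_edges E (D - {u})"
    unfolding induced_edges_def by (auto simp: doubleton_eq_iff)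
  ultimately show "induced_edges E (D - {u}) \<subset> induced_edges E D"
    using induced_edges_mono[of "D - {u}" D E] by blast
qed (rule finite_induced_edges[OF assms(1)])

lemma card_induced_edges_less:
  assumes "graph V E" "finite D" "u \<in> D" "w \<in> D" "E u w"
    and "\<forall>x\<in>K. \<forall>y\<in>S. \<not> E y x" "S - K \<subseteq> D - {u}"
  shows "card (induced_edges E S) < card (induced_edges E D)"
proof -
  have "induced_edges E S = induced_edges E (S - K)"
    by (rule induced_edges_Diff_isolated[OF assms(1,6), symmetric])
  also have "\<dots> \<subseteq> induced_edges E (D - {u})" by (rule induced_edges_mono[OF assms(7)])
  finally have "card (induced_edges E S) \<le> card (induced_edges E (D - {u}))"
    using assms(2) by (simp add: card_mono finite_induced_edges)
  also have "\<dots> < card (induced_edges E D)"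
    by (rule card_induced_edges_Diff_less[of D u w E, OF assms(2-5)])
  finally show ?thesis .
qed

lemma X_set_props:
  fixes idx :: "'a \<Rightarrow> nat" and D :: "'a set" and u v :: 'a
  assumes "graph V E"
  defines "X \<equiv> X_set E idx D u v"
  shows "X \<subseteq> priv_open E D u" "X \<inter> cnbh E v = {}" "\<forall>a\<in>X. \<forall>b\<in>X. \<not> E a b"
    "priv_open E D u \<subseteq> cnbhs E ({v} \<union> X)"
proof -
  define P where "P = priv_open E D u"
  have "finite P"
    using priv_open_subset[OF assms(1)] graph_finite[OF assms(1)] finite_subset
    unfolding P_def by blast
  have "X \<subseteq> P \<and> X \<inter> cnbh E v = {} \<and> (\<forall>a\<in>X. \<forall>b\<in>X. \<not> E a b) \<and> P - cnbhs E ({v} \<union> X) = {}"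
    unfolding X_def X_set_def P_def[symmetric]
  proof (rule while_rule[where P = "\<lambda>X. X \<subseteq> P \<and> X \<inter> cnbh E v = {} \<and> (\<forall>a\<in>X. \<forall>b\<in>X. \<not> E a b)"
        and r = "measure (\<lambda>X. card (P - X))"])
    fix X
    assume inv: "X \<subseteq> P \<and> X \<inter> cnbh E v = {} \<and> (\<forall>a\<in>X. \<forall>b\<in>X. \<not> E a b)"
      and "P - cnbhs E ({v} \<union> X) \<noteq> {}"
    define m where "m = min_idx idx (P - cnbhs E ({v} \<union> X))"
    have m: "m \<in> P - cnbhs E ({v} \<union> X)"
      using min_idx_in[OF \<open>P - cnbhs E ({v} \<union> X) \<noteq> {}\<close>] unfolding m_def .
    then have "m \<notin> cnbh E v" "\<forall>a\<in>X. m \<noteq> a \<and> \<not> E a m"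
      unfolding cnbhs_def cnbh_def nbh_def by blast+
    then show "insert m X \<subseteq> P \<and> insert m X \<inter> cnbh E v = {}
        \<and> (\<forall>a\<in>insert m X. \<forall>b\<in>insert m X. \<not> E a b)"
      using inv m graph_sym[OF assms(1)] graph_irrefl[OF assms(1)] by blast
    have "P - insert m X \<subset> P - X" using \<open>\<forall>a\<in>X. m \<noteq> a \<and> \<not> E a m\<close> m by blast
    then show "(insert m X, X) \<in> measure (\<lambda>X. card (P - X))"
      using \<open>finite P\<close> by (simp add: psubset_card_mono)
  qed auto
  then show "X \<subseteq> priv_open E D u" "X \<inter> cnbh E v = {}" "\<forall>a\<in>X. \<forall>b\<in>X. \<not> E a b"
    "priv_open E D u \<subseteq> cnbhs E ({v} \<union> X)"
    unfolding P_def by blast+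
qed

lemma priv_open_independent_isolated:
  assumes "K \<subseteq> priv_open E D u" "\<forall>a\<in>K. \<forall>b\<in>K. \<not> E a b"
  shows "\<forall>x\<in>K. \<forall>y\<in>(D - {u}) \<union> K. \<not> E y x"
  using assms by (auto simp: priv_open_iff subset_iff)

lemma D'_set_props:
  fixes idx :: "'a \<Rightarrow> nat"
  assumes "graph V E" "dominating V E D" "u \<in> D" "w \<in> D" "E u w" "v \<in> priv_open E D u"
  defines "K \<equiv> X_set E idx D u v \<union> {v}"
  shows "dominating V E (D'_set E idx D u v)" "\<forall>x\<in>K. \<forall>y\<in>D'_set E idx D u v. \<not> E y x"
proof -
  note X = X_set_props[OF assms(1), where idx = idx and D = D and u = u and v = v]
  have D'_eq: "D'_set E idx D u v = (D - {u}) \<union> K" unfolding D'_set_def K_def by blast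
  have K_priv: "K \<subseteq> priv_open E D u" using X(1) assms(6) unfolding K_def by blast
  have "\<forall>a\<in>K. \<forall>b\<in>K. \<not> E a b"
    using X(2,3) graph_sym[OF assms(1)] graph_irrefl[OF assms(1)]
    unfolding K_def cnbh_def nbh_def by blast
  then show "\<forall>x\<in>K. \<forall>y\<in>D'_set E idx D u v. \<not> E y x"
    unfolding D'_eq by (rule priv_open_independent_isolated[OF K_priv])
  have "u \<in> cnbh E w" "w \<in> D - {u}"
    using assms(4,5) graph_sym[OF assms(1)] graph_irrefl[OF assms(1)]
    unfolding cnbh_def nbh_def by auto
  then have "u \<in> cnbhs E (D - {u})" unfolding cnbhs_def by blast
  moreover have "K \<subseteq> V" using K_priv priv_open_subset[OF assms(1)] by blast
  moreover have "priv_open E D u \<subseteq> cnbhs E K"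
    using X(4) unfolding K_def by (simp add: Un_commute)
  ultimately show "dominating V E (D'_set E idx D u v)"
    unfolding D'_eq by (rule dominating_exchange[OF assms(1,2)])
qed

theorem lemma1:
  fixes V :: "'a set" and E :: "'a \<Rightarrow> 'a \<Rightarrow> bool" and idx :: "'a \<Rightarrow> nat"
    and D :: "'a set" and u w v :: 'a
  assumes "graph V E"
    and "inj_on idx V"
    and "minimal_dominating V E D"
    and "u \<in> D" and "w \<in> D" and "E u w"
    and "v \<in> priv_open E D u"
  shows "minimal_dominating V E (Dstar_set V E idx D u v)
       \<and> X_set E idx D u v \<union> {v} \<subseteq> Dstar_set V E idx D u v
       \<and> card (induced_edges E (Dstar_set V E idx D u v)) < card (induced_edges E D)
       \<and> isolated_in E (Dstar_set V E idx D u v) v"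
proof -
  define K where "K = X_set E idx D u v \<union> {v}"
  define D' where "D' = D'_set E idx D u v"
  define Ds where "Ds = Dstar_set V E idx D u v"
  have domD: "dominating V E D" using assms(3) unfolding minimal_dominating_def by blast
  note D' = D'_set_props[OF assms(1) domD assms(4-7), where idx = idx, folded K_def D'_def]
  have "K \<subseteq> D'" unfolding K_def D'_def D'_set_def by blast
  then have Ds: "minimal_dominating V E Ds" "K \<subseteq> Ds" "Ds \<subseteq> D'"
    using greedy_removal_props[OF assms(1) D'(1) _ D'(2), of idx]
    unfolding Ds_def Dstar_set_def D'_def by simp_all
  have "finite D"
    using domD graph_finite[OF assms(1)] finite_subset unfolding dominating_def by blast
  moreover have "\<forall>x\<in>K. \<forall>y\<in>Ds. \<not> E y x" using D'(2) Ds(3) by blast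
  moreover have "Ds - K \<subseteq> D - {u}" using Ds(3) unfolding D'_def D'_set_def K_def by blast
  ultimately have "card (induced_edges E Ds) < card (induced_edges E D)"
    by (rule card_induced_edges_less[OF assms(1) _ assms(4-6)])
  moreover have "isolated_in E Ds v"
    using Ds(2,3) D'(2) graph_sym[OF assms(1)] unfolding isolated_in_def K_def by blast
  ultimately show ?thesis using Ds(1,2) unfolding Ds_def K_def by blast
qed

end
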